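(* For $0\le k\le n$, \[ q^{k^2}[2]_q^{k}\,S_B[n,k]=\sum_{\pi\in B_{\subseteq}([n],k)}q^{m(\pi)}. \]
   Context: $[k]_q=1+\dots+q^{k-1}$, $[0]_q=0$. $S_B[n,k]$ is defined by $S_B[0,k]=\delta_{0k}$ and $S_B[n,k]=S_B[n-1,k-1]+[2k+1]_qS_B[n-1,k]$ for $n\ge1$ (with $S_B[n-1,-1]=0$). For $S\subset\mathbb{Z}\setminus\{0\}$ and $\overline{S}=\{-i:i\in S\}$, a standard signed partition (SSP) of $S$ with $k$ blocks is a sequence $(S_1,\dots,S_k)$ of disjoint nonempty subsets of $S\cup\overline{S}$ such that $\{S_1,\dots,S_k,\overline{S_1},\dots,\overline{S_k}\}$ is a partition of $S\cup\overline{S}$ and $\min|S_1|\le\dots\le\min|S_k|$, where $|S_i|=\{|j|:j\in S_i\}$. A PSSP of $S$ is an SSP of a (possibly empty) subset of $S$; $B_{\subseteq}(S,k)$ is the set of PSSPs of $S$ with $k$ blocks. For $\pi=(S_1,\dots,S_k)$, $\mathrm{pos}(\pi)=\#\{x\in\bigcup_iS_i:x>0\}$ and $m(\pi)=2\sum_{i=1}^k i\cdot\#S_i-\mathrm{pos}(\pi)$. *)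

theory Defs
  imports Main
begin

definition qint :: "'a::comm_semiring_1 \<Rightarrow> nat \<Rightarrow> 'a" where
  "qint q k = (\<Sum>i<k. q ^ i)"

fun SB :: "'a::comm_semiring_1 \<Rightarrow> nat \<Rightarrow> nat \<Rightarrow> 'a" where
  "SB q 0 k = (if k = 0 then 1 else 0)"
| "SB q (Suc n) 0 = qint q 1 * SB q n 0"
| "SB q (Suc n) (Suc k) = SB q n k + qint q (2 * Suc k + 1) * SB q n (Suc k)"

definition neg_set :: "int set \<Rightarrow> int set" where
  "neg_set A = uminus ` A"

definition ssp :: "int set \<Rightarrow> int set list \<Rightarrow> bool" where
  "ssp S \<pi> \<longleftrightarrow>
     (\<forall>i<length \<pi>. \<pi> ! i \<noteq> {}) \<and>
     (\<forall>i<length \<pi>. \<forall>j<length \<pi>. i \<noteq> j \<longrightarrow>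
         \<pi> ! i \<inter> \<pi> ! j = {} \<and> neg_set (\<pi> ! i) \<inter> neg_set (\<pi> ! j) = {}) \<and>
     (\<forall>i<length \<pi>. \<forall>j<length \<pi>. \<pi> ! i \<inter> neg_set (\<pi> ! j) = {}) \<and>
     (\<Union>(set \<pi>) \<union> \<Union>(neg_set ` set \<pi>) = S \<union> neg_set S) \<and>
     sorted (map (\<lambda>B. Min (abs ` B)) \<pi>)"

definition pssp :: "int set \<Rightarrow> nat \<Rightarrow> int set list set" where
  "pssp S k = {\<pi>. length \<pi> = k \<and> (\<exists>T. T \<subseteq> S \<and> ssp T \<pi>)}"

definition pos :: "int set list \<Rightarrow> nat" where
  "pos \<pi> = card {x \<in> \<Union>(set \<pi>). x > 0}"

text \<open>m(\<pi>) = 2 \<Sum>_{i=1}^k i #S_i - pos(\<pi>) (the list is 0-indexed, so block i+1 is \<pi>!i).\<close>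
definition mstat :: "int set list \<Rightarrow> int" where
  "mstat \<pi> = 2 * (\<Sum>i<length \<pi>. int (i + 1) * int (card (\<pi> ! i))) - int (pos \<pi>)"

end

(*
  Encode a partial standard signed partition [S_1, ..., S_k] of {1..n} by its entries (i, x)
  with x in S_(i+1). Then m becomes a sum over the entries, x in S_(i+1) contributing
  2(i+1) - [x > 0].

  Sort the partitions of {1..n+1} with j+1 blocks by the fate of the letter n+1. Either neither
  n+1 nor -(n+1) occurs, and we have a partition of {1..n} with j+1 blocks. Or s = +-(n+1) lies
  in a block S_(i+1) together with other elements; removing it leaves a partition of {1..n}
  with j+1 blocks and lowers m by 2i+1 or 2i+2. Or {s} is a block of its own; having the
  largest minimum it must be the last block, and removing it leaves a partition of {1..n}
  with j blocks and lowers m by 2j+1 or 2j+2. Hence F(n,k), the sum of q^m over partitions of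
  {1..n} with k blocks, satisfies F(n+1,j+1) = [2j+3]_q F(n,j+1) + q^(2j+1) (1+q) F(n,j),
  the recurrence of q^(k^2) [2]_q^k S_B[n,k].
*)

theory Submission
  imports Defs
begin

section \<open>Entries of a list of blocks\<close>

definition entries :: "'a set list \<Rightarrow> (nat \<times> 'a) set" where
  "entries \<pi> = (SIGMA i:{..<length \<pi>}. \<pi> ! i)"

lemma mem_entries: "(i, x) \<in> entries \<pi> \<longleftrightarrow> i < length \<pi> \<and> x \<in> \<pi> ! i"
  by (simp add: entries_def)

lemma snd_entries: "snd ` entries \<pi> = \<Union>(set \<pi>)"
proof (intro equalityI subsetI)
  fix x assume "x \<in> \<Union>(set \<pi>)"
  then obtain i where "i < length \<pi>" "x \<in> \<pi> ! i" by (auto simp: in_set_conv_nth)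
  then have "(i, x) \<in> entries \<pi>" by (simp add: mem_entries)
  then show "x \<in> snd ` entries \<pi>" by (rule rev_image_eqI) simp
qed (auto simp: entries_def)

lemma abs_snd_entries: "(abs \<circ> snd) ` entries \<pi> = abs ` \<Union>(set \<pi>)"
  by (metis image_comp snd_entries)

lemma entries_list_update_insert:
  "i < length \<pi> \<Longrightarrow> entries (\<pi>[i := insert x (\<pi> ! i)]) = insert (i, x) (entries \<pi>)"
  by (auto simp: entries_def nth_list_update split: if_splits)

lemma entries_list_update_remove:
  "i < length \<pi> \<Longrightarrow> entries (\<pi>[i := \<pi> ! i - {x}]) = entries \<pi> - {(i, x)}"
  by (auto simp: entries_def nth_list_update split: if_splits)

lemma entries_append_singleton: "entries (\<pi> @ [{x}]) = insert (length \<pi>, x) (entries \<pi>)"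
  by (auto simp: entries_def nth_append less_Suc_eq)

section \<open>Partial standard signed partitions\<close>

definition min_abs :: "int set \<Rightarrow> int" where
  "min_abs B = Min (abs ` B)"

lemma min_abs_le: "finite B \<Longrightarrow> x \<in> B \<Longrightarrow> min_abs B \<le> \<bar>x\<bar>"
  by (simp add: min_abs_def)

lemma min_abs_insert_larger:
  assumes "finite B" "B \<noteq> {}" "\<forall>x\<in>B. \<bar>x\<bar> < \<bar>s\<bar>"
  shows "min_abs (insert s B) = min_abs B"
proof -
  obtain x where "x \<in> B" using assms(2) by blast
  then have "min_abs B < \<bar>s\<bar>" using assms min_abs_le by fastforce
  then show ?thesis using assms(1,2) by (simp add: min_abs_def)
qed

lemma map_min_abs_list_update:
  "i < length \<pi> \<Longrightarrow> min_abs B = min_abs (\<pi> ! i) \<Longrightarrow> map min_abs (\<pi>[i := B]) = map min_abs \<pi>"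
  by (metis length_map list_update_id map_update nth_map)

(* A partial standard signed partition of {1..n}, as the list of its blocks. Injectivity of
   |x| on the entries says at once that the sets S_i and -S_j are pairwise disjoint. *)
definition signed_blocks :: "nat \<Rightarrow> int set list \<Rightarrow> bool" where
  "signed_blocks n \<pi> \<longleftrightarrow> (\<forall>B\<in>set \<pi>. B \<noteq> {}) \<and> inj_on (abs \<circ> snd) (entries \<pi>) \<and>
     (abs \<circ> snd) ` entries \<pi> \<subseteq> {1..int n} \<and> sorted (map min_abs \<pi>)"

definition signed_block_lists :: "nat \<Rightarrow> nat \<Rightarrow> int set list set" where
  "signed_block_lists n k = {\<pi>. length \<pi> = k \<and> signed_blocks n \<pi>}"

lemma signed_blocksD:
  assumes "signed_blocks n \<pi>"
  shows "\<forall>B\<in>set \<pi>. B \<noteq> {}" "inj_on (abs \<circ> snd) (entries \<pi>)"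
    "(abs \<circ> snd) ` entries \<pi> \<subseteq> {1..int n}" "sorted (map min_abs \<pi>)"
  using assms unfolding signed_blocks_def by blast+

lemma signed_blocks_abs_eq:
  assumes "signed_blocks n \<pi>" "(i, x) \<in> entries \<pi>" "(j, y) \<in> entries \<pi>" "\<bar>x\<bar> = \<bar>y\<bar>"
  shows "i = j" "x = y"
  using inj_onD[of "abs \<circ> snd" "entries \<pi>" "(i, x)" "(j, y)"] assms
  by (auto simp: signed_blocks_def)

lemma signed_blocks_abs_bounds:
  assumes "signed_blocks n \<pi>" "(i, x) \<in> entries \<pi>"
  shows "1 \<le> \<bar>x\<bar>" "\<bar>x\<bar> \<le> int n"
proof -
  have "(abs \<circ> snd) (i, x) \<in> {1..int n}"
    using assms unfolding signed_blocks_def by blast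
  then show "1 \<le> \<bar>x\<bar>" "\<bar>x\<bar> \<le> int n" by simp_all
qed

lemma signed_blocks_finite_entries:
  assumes "signed_blocks n \<pi>" shows "finite (entries \<pi>)"
proof (rule finite_imageD)
  show "finite ((abs \<circ> snd) ` entries \<pi>)"
    using assms unfolding signed_blocks_def by (meson finite_atLeastAtMost_int finite_subset)
qed (use assms in \<open>simp add: signed_blocks_def\<close>)

lemma signed_blocks_finite_block:
  assumes "signed_blocks n \<pi>" "i < length \<pi>" shows "finite (\<pi> ! i)"
proof -
  have "\<pi> ! i \<subseteq> snd ` entries \<pi>" using assms(2) by (metis Union_upper nth_mem snd_entries)
  then show ?thesis using finite_imageI[OF signed_blocks_finite_entries[OF assms(1)]]
    by (rule finite_subset)
qed

lemma Un_uminus_abs_image: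
  fixes A :: "'a::linordered_idom set"
  shows "A \<union> uminus ` A = abs ` A \<union> uminus ` abs ` A"
proof -
  have "{x, -x} = {\<bar>x\<bar>, -\<bar>x\<bar>}" for x :: 'a
    by (cases "0 \<le> x") auto
  then have "(\<Union>x\<in>A. {x, -x}) = (\<Union>x\<in>A. {\<bar>x\<bar>, -\<bar>x\<bar>})" by simp
  then show ?thesis by blast
qed

lemma ssp_imp_signed_blocks:
  assumes "ssp T \<pi>" "T \<subseteq> {1..int n}"
  shows "signed_blocks n \<pi>"
proof -
  have ne: "\<forall>i<length \<pi>. \<pi> ! i \<noteq> {}"
    and disj: "\<forall>i<length \<pi>. \<forall>j<length \<pi>. i \<noteq> j \<longrightarrow>
                 \<pi> ! i \<inter> \<pi> ! j = {} \<and> neg_set (\<pi> ! i) \<inter> neg_set (\<pi> ! j) = {}"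
    and disj_neg: "\<forall>i<length \<pi>. \<forall>j<length \<pi>. \<pi> ! i \<inter> neg_set (\<pi> ! j) = {}"
    and cover: "\<Union>(set \<pi>) \<union> \<Union>(neg_set ` set \<pi>) = T \<union> neg_set T"
    and sorted: "sorted (map min_abs \<pi>)"
    using assms(1) unfolding ssp_def min_abs_def[abs_def] by simp_all
  have "inj_on (abs \<circ> snd) (entries \<pi>)"
  proof (rule inj_onI, clarsimp)
    fix i j x y assume "(i, x) \<in> entries \<pi>" "(j, y) \<in> entries \<pi>" "\<bar>x\<bar> = \<bar>y\<bar>"
    then have ij: "i < length \<pi>" "j < length \<pi>" "x \<in> \<pi> ! i" "y \<in> \<pi> ! j"
      by (auto simp: mem_entries)
    have "x \<notin> neg_set (\<pi> ! j)"
      using disj_neg ij by blast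
    then have "y \<noteq> -x"
      using ij(4) unfolding neg_set_def by (metis image_eqI minus_minus)
    with \<open>\<bar>x\<bar> = \<bar>y\<bar>\<close> have "x = y" by arith
    then show "i = j \<and> x = y" using disj ij by blast
  qed
  moreover have "abs ` \<Union>(set \<pi>) \<subseteq> {1..int n}"
  proof
    fix y assume "y \<in> abs ` \<Union>(set \<pi>)"
    then obtain x where "y = \<bar>x\<bar>" "x \<in> \<Union>(set \<pi>)" by blast
    then have "x \<in> T \<or> -x \<in> T" using cover by (auto simp: neg_set_def)
    then show "y \<in> {1..int n}" using assms(2) \<open>y = \<bar>x\<bar>\<close> by auto
  qed
  moreover have "\<forall>B\<in>set \<pi>. B \<noteq> {}" using ne by (auto simp: in_set_conv_nth)
  ultimately show ?thesis using sorted unfolding signed_blocks_def abs_snd_entries by blast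
qed

lemma signed_blocks_imp_ssp:
  assumes sb: "signed_blocks n \<pi>"
  shows "ssp (abs ` \<Union>(set \<pi>)) \<pi>"
proof -
  have same: "i = j \<and> x = y"
    if "i < length \<pi>" "j < length \<pi>" "x \<in> \<pi> ! i" "y \<in> \<pi> ! j" "\<bar>x\<bar> = \<bar>y\<bar>" for i j x y
    using signed_blocks_abs_eq[OF sb, of i x j y] that by (simp add: mem_entries)
  have nonzero: "x \<noteq> 0" if "i < length \<pi>" "x \<in> \<pi> ! i" for i x
    using signed_blocks_abs_bounds(1)[OF sb, of i x] that by (auto simp: mem_entries)
  have "\<Union>(set \<pi>) \<union> \<Union>(neg_set ` set \<pi>) = \<Union>(set \<pi>) \<union> uminus ` \<Union>(set \<pi>)"
    by (auto simp: neg_set_def)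
  also have "\<dots> = abs ` \<Union>(set \<pi>) \<union> neg_set (abs ` \<Union>(set \<pi>))"
    unfolding neg_set_def by (rule Un_uminus_abs_image)
  finally have cover:
    "\<Union>(set \<pi>) \<union> \<Union>(neg_set ` set \<pi>) = abs ` \<Union>(set \<pi>) \<union> neg_set (abs ` \<Union>(set \<pi>))" .
  show ?thesis
    unfolding ssp_def min_abs_def[symmetric]
  proof (intro conjI allI impI cover)
    fix i assume "i < length \<pi>"
    then show "\<pi> ! i \<noteq> {}" using sb by (simp add: signed_blocks_def)
  next
    fix i j assume ij: "i < length \<pi>" "j < length \<pi>" "i \<noteq> j"
    show "\<pi> ! i \<inter> \<pi> ! j = {}" using same[OF ij(1,2)] ij(3) by blast
    show "neg_set (\<pi> ! i) \<inter> neg_set (\<pi> ! j) = {}"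
      using same[OF ij(1,2)] ij(3) by (fastforce simp: neg_set_def)
  next
    fix i j assume ij: "i < length \<pi>" "j < length \<pi>"
    show "\<pi> ! i \<inter> neg_set (\<pi> ! j) = {}"
      using same[OF ij] nonzero[OF ij(1)] by (fastforce simp: neg_set_def)
  next
    show "sorted (map min_abs \<pi>)" using sb by (simp add: signed_blocks_def)
  qed
qed

lemma pssp_atLeastAtMost: "pssp {1..int n} k = signed_block_lists n k"
proof (intro set_eqI iffI)
  fix \<pi> assume "\<pi> \<in> pssp {1..int n} k"
  then obtain T where "length \<pi> = k" "T \<subseteq> {1..int n}" "ssp T \<pi>"
    unfolding pssp_def by blast
  then show "\<pi> \<in> signed_block_lists n k"
    by (simp add: signed_block_lists_def ssp_imp_signed_blocks)
next
  fix \<pi> assume "\<pi> \<in> signed_block_lists n k"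
  then have len: "length \<pi> = k" and sb: "signed_blocks n \<pi>"
    by (simp_all add: signed_block_lists_def)
  have "abs ` \<Union>(set \<pi>) \<subseteq> {1..int n}"
    using signed_blocksD(3)[OF sb] by (simp only: abs_snd_entries)
  with len signed_blocks_imp_ssp[OF sb] show "\<pi> \<in> pssp {1..int n} k"
    unfolding pssp_def by blast
qed

section \<open>Adding and removing the letter n + 1\<close>

lemma signed_blocks_mono:
  assumes "signed_blocks n \<pi>" "n \<le> m" shows "signed_blocks m \<pi>"
proof -
  have "{1..int n} \<subseteq> {1..int m}" using assms(2) by auto
  then show ?thesis using signed_blocksD[OF assms(1)] unfolding signed_blocks_def by blast
qed

lemma signed_blocks_Suc_no_top:
  assumes sb: "signed_blocks (Suc n) \<rho>" and no_top: "\<forall>(i, x)\<in>entries \<rho>. \<bar>x\<bar> \<noteq> int (Suc n)"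
  shows "signed_blocks n \<rho>"
proof -
  have "(abs \<circ> snd) ` entries \<rho> \<subseteq> {1..int n}"
  proof clarify
    fix i x assume "(i, x) \<in> entries \<rho>"
    then show "(abs \<circ> snd) (i, x) \<in> {1..int n}"
      using signed_blocks_abs_bounds[OF sb] no_top by fastforce
  qed
  then show ?thesis using signed_blocksD[OF sb] unfolding signed_blocks_def by blast
qed

lemma signed_blocks_below_top:
  assumes sb: "signed_blocks (Suc n) \<rho>" and top: "(i, s) \<in> entries \<rho>" "\<bar>s\<bar> = int (Suc n)"
    and other: "(j, x) \<in> entries \<rho>" "(j, x) \<noteq> (i, s)"
  shows "\<bar>x\<bar> \<le> int n"
proof -
  have "\<bar>x\<bar> \<noteq> \<bar>s\<bar>" using signed_blocks_abs_eq[OF sb other(1) top(1)] other(2) by blast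
  then show ?thesis using signed_blocks_abs_bounds(2)[OF sb other(1)] top(2) by simp
qed

lemma signed_blocks_add_top_entry:
  assumes sb: "signed_blocks n \<pi>" and E: "entries \<rho> = insert (i, s) (entries \<pi>)"
    and s: "\<bar>s\<bar> = int (Suc n)"
    and "\<forall>B\<in>set \<rho>. B \<noteq> {}" "sorted (map min_abs \<rho>)"
  shows "signed_blocks (Suc n) \<rho>"
proof -
  have range: "(abs \<circ> snd) ` entries \<pi> \<subseteq> {1..int n}" and inj: "inj_on (abs \<circ> snd) (entries \<pi>)"
    using signed_blocksD[OF sb] by blast+
  then have new: "(abs \<circ> snd) (i, s) \<notin> (abs \<circ> snd) ` entries \<pi>" using s by auto
  have "inj_on (abs \<circ> snd) (entries \<rho>)" using inj new unfolding E by auto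
  moreover have "(abs \<circ> snd) ` entries \<rho> \<subseteq> {1..int (Suc n)}" using range s unfolding E by auto
  ultimately show ?thesis using assms(4,5) unfolding signed_blocks_def by blast
qed

lemma signed_blocks_del_top_entry:
  assumes sb: "signed_blocks (Suc n) \<rho>" and top: "(i, s) \<in> entries \<rho>" "\<bar>s\<bar> = int (Suc n)"
    and E: "entries \<pi> = entries \<rho> - {(i, s)}"
    and "\<forall>B\<in>set \<pi>. B \<noteq> {}" "sorted (map min_abs \<pi>)"
  shows "signed_blocks n \<pi>"
proof -
  have "inj_on (abs \<circ> snd) (entries \<pi>)"
    using signed_blocksD(2)[OF sb] unfolding E by (rule inj_on_subset) blast
  moreover have "(abs \<circ> snd) ` entries \<pi> \<subseteq> {1..int n}"
  proof clarify
    fix j x assume "(j, x) \<in> entries \<pi>"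
    then have "(j, x) \<in> entries \<rho>" "(j, x) \<noteq> (i, s)" using E by auto
    then show "(abs \<circ> snd) (j, x) \<in> {1..int n}"
      using signed_blocks_below_top[OF sb top] signed_blocks_abs_bounds(1)[OF sb] by simp
  qed
  ultimately show ?thesis using assms(5,6) unfolding signed_blocks_def by blast
qed

lemma signed_blocks_insert_top:
  assumes sb: "signed_blocks n \<pi>" and i: "i < length \<pi>" and s: "\<bar>s\<bar> = int (Suc n)"
  shows "signed_blocks (Suc n) (\<pi>[i := insert s (\<pi> ! i)])"
proof (rule signed_blocks_add_top_entry[OF sb entries_list_update_insert[OF i] s])
  have "\<bar>x\<bar> < \<bar>s\<bar>" if "x \<in> \<pi> ! i" for x
    using signed_blocks_abs_bounds(2)[OF sb, of i x] i that s by (simp add: mem_entries)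
  moreover have "\<pi> ! i \<noteq> {}" using signed_blocksD(1)[OF sb] i by simp
  ultimately have "min_abs (insert s (\<pi> ! i)) = min_abs (\<pi> ! i)"
    using min_abs_insert_larger signed_blocks_finite_block[OF sb i] by blast
  then show "sorted (map min_abs (\<pi>[i := insert s (\<pi> ! i)]))"
    using signed_blocksD(4)[OF sb] i by (simp add: map_min_abs_list_update)
  show "\<forall>B\<in>set (\<pi>[i := insert s (\<pi> ! i)]). B \<noteq> {}"
    using signed_blocksD(1)[OF sb] set_update_subset_insert by fastforce
qed

lemma signed_blocks_append_top:
  assumes sb: "signed_blocks n \<pi>" and s: "\<bar>s\<bar> = int (Suc n)"
  shows "signed_blocks (Suc n) (\<pi> @ [{s}])"
proof (rule signed_blocks_add_top_entry[OF sb entries_append_singleton s])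
  have "min_abs (\<pi> ! i) \<le> \<bar>s\<bar>" if i: "i < length \<pi>" for i
  proof -
    have "\<pi> ! i \<noteq> {}" using signed_blocksD(1)[OF sb] i by simp
    then obtain x where x: "x \<in> \<pi> ! i" by blast
    have "min_abs (\<pi> ! i) \<le> \<bar>x\<bar>" using min_abs_le[OF signed_blocks_finite_block[OF sb i] x] .
    also have "\<bar>x\<bar> \<le> int n" using signed_blocks_abs_bounds(2)[OF sb, of i x] i x by (simp add: mem_entries)
    finally show ?thesis using s by simp
  qed
  then have "\<forall>y\<in>set (map min_abs \<pi>). y \<le> min_abs {s}"
    by (auto simp: in_set_conv_nth min_abs_def[of "{s}"])
  then show "sorted (map min_abs (\<pi> @ [{s}]))"
    using signed_blocksD(4)[OF sb] by (simp add: sorted_append)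
  show "\<forall>B\<in>set (\<pi> @ [{s}]). B \<noteq> {}" using signed_blocksD(1)[OF sb] by simp
qed

lemma signed_blocks_remove_top:
  assumes sb: "signed_blocks (Suc n) \<rho>" and top: "(i, s) \<in> entries \<rho>" "\<bar>s\<bar> = int (Suc n)"
    and not_single: "\<rho> ! i \<noteq> {s}"
  shows "signed_blocks n (\<rho>[i := \<rho> ! i - {s}])"
proof -
  have i: "i < length \<rho>" and si: "s \<in> \<rho> ! i" using top(1) by (simp_all add: mem_entries)
  have "\<bar>x\<bar> < \<bar>s\<bar>" if "x \<in> \<rho> ! i - {s}" for x
  proof -
    have "(i, x) \<in> entries \<rho>" "(i, x) \<noteq> (i, s)" using that i by (simp_all add: mem_entries)
    then have "\<bar>x\<bar> \<le> int n" by (rule signed_blocks_below_top[OF sb top])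
    then show ?thesis using top(2) by simp
  qed
  moreover have ne: "\<rho> ! i - {s} \<noteq> {}" using si not_single by blast
  moreover have "finite (\<rho> ! i - {s})" using signed_blocks_finite_block[OF sb i] by simp
  ultimately have "min_abs (insert s (\<rho> ! i - {s})) = min_abs (\<rho> ! i - {s})"
    using min_abs_insert_larger[of "\<rho> ! i - {s}" s] by blast
  then have "min_abs (\<rho> ! i - {s}) = min_abs (\<rho> ! i)" using si by (simp add: insert_absorb)
  then have "sorted (map min_abs (\<rho>[i := \<rho> ! i - {s}]))"
    using signed_blocksD(4)[OF sb] i by (simp add: map_min_abs_list_update)
  moreover have "\<forall>B\<in>set (\<rho>[i := \<rho> ! i - {s}]). B \<noteq> {}"
    using set_update_subset_insert[of \<rho> i "\<rho> ! i - {s}"] signed_blocksD(1)[OF sb] ne by blast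
  ultimately show ?thesis
    using signed_blocks_del_top_entry[OF sb top entries_list_update_remove[OF i]] by blast
qed

lemma signed_blocks_singleton_top_last:
  assumes sb: "signed_blocks (Suc n) \<rho>" and i: "i < length \<rho>" and single: "\<rho> ! i = {s}"
    and s: "\<bar>s\<bar> = int (Suc n)"
  shows "i = length \<rho> - 1"
proof (rule ccontr)
  define l where "l = length \<rho> - 1"
  assume "i \<noteq> length \<rho> - 1"
  then have il: "i < l" "l < length \<rho>" using i by (simp_all add: l_def)
  have top: "(i, s) \<in> entries \<rho>" using i single by (simp add: mem_entries)
  have "\<rho> ! l \<noteq> {}" using signed_blocksD(1)[OF sb] il(2) by simp
  then obtain x where x: "x \<in> \<rho> ! l" by blast
  have "(l, x) \<in> entries \<rho>" "(l, x) \<noteq> (i, s)" using x il by (auto simp: mem_entries)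
  then have small: "\<bar>x\<bar> \<le> int n" by (rule signed_blocks_below_top[OF sb top s])
  have "\<bar>s\<bar> = min_abs (\<rho> ! i)" using single by (simp add: min_abs_def)
  also have "\<dots> \<le> min_abs (\<rho> ! l)"
    using sorted_nth_mono[OF signed_blocksD(4)[OF sb], of i l] il by simp
  also have "\<dots> \<le> \<bar>x\<bar>" by (rule min_abs_le[OF signed_blocks_finite_block[OF sb il(2)] x])
  finally show False using small s by simp
qed

lemma signed_blocks_singleton_top:
  assumes sb: "signed_blocks (Suc n) \<rho>" and i: "i < length \<rho>" and single: "\<rho> ! i = {s}"
    and s: "\<bar>s\<bar> = int (Suc n)"
  shows "\<rho> = butlast \<rho> @ [{s}]" "signed_blocks n (butlast \<rho>)"
proof -
  have top: "(i, s) \<in> entries \<rho>" using i single by (simp add: mem_entries)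
  note last = signed_blocks_singleton_top_last[OF assms]
  have ne: "\<rho> \<noteq> []" using i by auto
  show decomp: "\<rho> = butlast \<rho> @ [{s}]"
    using append_butlast_last_id[OF ne] last_conv_nth[OF ne] single last by simp
  show "signed_blocks n (butlast \<rho>)"
  proof (rule signed_blocks_del_top_entry[OF sb top s])
    have "entries \<rho> = entries (butlast \<rho> @ [{s}])" using decomp by (rule arg_cong)
    also have "\<dots> = insert (i, s) (entries (butlast \<rho>))"
      using entries_append_singleton[of "butlast \<rho>" s] last by simp
    finally have "entries \<rho> = insert (i, s) (entries (butlast \<rho>))" .
    moreover have "(i, s) \<notin> entries (butlast \<rho>)" using last by (simp add: mem_entries)
    ultimately show "entries (butlast \<rho>) = entries \<rho> - {(i, s)}" by blast
    show "\<forall>B\<in>set (butlast \<rho>). B \<noteq> {}" using signed_blocksD(1)[OF sb] by (meson in_set_butlastD)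
    show "sorted (map min_abs (butlast \<rho>))"
      using signed_blocksD(4)[OF sb] by (simp add: map_butlast sorted_butlast)
  qed
qed

section \<open>The statistic m\<close>

(* For the nonzero element x of the block S_(i+1), 2i+1+[x < 0] = 2(i+1) - [x > 0]. *)
definition mweight :: "int set list \<Rightarrow> nat" where
  "mweight \<pi> = (\<Sum>(i, x)\<in>entries \<pi>. 2 * i + 1 + of_bool (x < 0))"

lemma mstat_eq_mweight:
  assumes sb: "signed_blocks n \<pi>"
  shows "mstat \<pi> = int (mweight \<pi>)"
proof -
  have fin: "finite (entries \<pi>)" by (rule signed_blocks_finite_entries[OF sb])
  have blocks: "(\<Sum>i<length \<pi>. int (i + 1) * int (card (\<pi> ! i))) = (\<Sum>(i, x)\<in>entries \<pi>. int (i + 1))"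
    using signed_blocks_finite_block[OF sb] unfolding entries_def
    by (simp add: sum.Sigma[symmetric] mult.commute)
  have "{x \<in> \<Union>(set \<pi>). 0 < x} = snd ` {e \<in> entries \<pi>. 0 < snd e}"
    unfolding snd_entries[symmetric] by blast
  moreover have "inj_on snd {e \<in> entries \<pi>. 0 < snd e}"
    using inj_on_imageI2[OF signed_blocksD(2)[OF sb]] by (rule inj_on_subset) blast
  ultimately have "pos \<pi> = card {e \<in> entries \<pi>. 0 < snd e}"
    unfolding pos_def by (simp add: card_image)
  then have pos: "int (pos \<pi>) = (\<Sum>(i, x)\<in>entries \<pi>. of_bool (0 < x))"
    using fin by (simp add: case_prod_unfold Int_def)
  have nonzero: "x \<noteq> 0" if "(i, x) \<in> entries \<pi>" for i x
    using signed_blocks_abs_bounds(1)[OF sb that] by auto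
  have "mstat \<pi> = (\<Sum>(i, x)\<in>entries \<pi>. 2 * int (i + 1) - of_bool (0 < x))"
    unfolding mstat_def blocks pos sum_distrib_left sum_subtractf[symmetric]
    by (simp add: case_prod_unfold)
  also have "\<dots> = (\<Sum>(i, x)\<in>entries \<pi>. int (2 * i + 1 + of_bool (x < 0)))"
    by (intro sum.cong refl) (auto dest: nonzero)
  also have "\<dots> = int (mweight \<pi>)" by (simp add: mweight_def case_prod_unfold)
  finally show ?thesis .
qed

lemma mweight_list_update_insert:
  assumes "finite (entries \<pi>)" "i < length \<pi>" "s \<notin> \<pi> ! i"
  shows "mweight (\<pi>[i := insert s (\<pi> ! i)]) = mweight \<pi> + (2 * i + 1 + of_bool (s < 0))"
  using assms by (simp add: mweight_def entries_list_update_insert mem_entries)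

lemma mweight_append_singleton:
  assumes "finite (entries \<pi>)"
  shows "mweight (\<pi> @ [{s}]) = mweight \<pi> + (2 * length \<pi> + 1 + of_bool (s < 0))"
  using assms by (simp add: mweight_def entries_append_singleton mem_entries)

section \<open>The recurrence\<close>

lemma finite_signed_block_lists: "finite (signed_block_lists n k)"
proof (rule finite_subset)
  have "B \<subseteq> {-int n..int n}" if "\<pi> \<in> signed_block_lists n k" "B \<in> set \<pi>" for \<pi> B
  proof
    fix x assume "x \<in> B"
    with that obtain i where "(i, x) \<in> entries \<pi>" "signed_blocks n \<pi>"
      by (auto simp: signed_block_lists_def in_set_conv_nth mem_entries)
    then show "x \<in> {-int n..int n}" using signed_blocks_abs_bounds(2) by fastforce
  qed
  then show "signed_block_lists n k \<subseteq> {\<pi>. set \<pi> \<subseteq> Pow {-int n..int n} \<and> length \<pi> = k}"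
    by (auto simp: signed_block_lists_def)
qed (simp add: finite_lists_length_eq)

definition mgf :: "'a::comm_semiring_1 \<Rightarrow> nat \<Rightarrow> nat \<Rightarrow> 'a" where
  "mgf q n k = (\<Sum>\<pi>\<in>signed_block_lists n k. q ^ mweight \<pi>)"

lemma sum_insert_top:
  fixes q :: "'a::comm_semiring_1"
  assumes i: "i < k" and s: "\<bar>s\<bar> = int (Suc n)"
  shows "(\<Sum>\<rho>\<in>(\<lambda>\<pi>. \<pi>[i := insert s (\<pi> ! i)]) ` signed_block_lists n k. q ^ mweight \<rho>)
    = q ^ (2 * i + 1 + of_bool (s < 0)) * mgf q n k"
proof -
  have len: "i < length \<pi>" and new: "s \<notin> \<pi> ! i" and fin: "finite (entries \<pi>)"
    if "\<pi> \<in> signed_block_lists n k" for \<pi>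
  proof -
    have sb: "signed_blocks n \<pi>" using that by (simp add: signed_block_lists_def)
    show "i < length \<pi>" using that i by (simp add: signed_block_lists_def)
    then show "s \<notin> \<pi> ! i" using signed_blocks_abs_bounds(2)[OF sb, of i s] s by (auto simp: mem_entries)
    show "finite (entries \<pi>)" by (rule signed_blocks_finite_entries[OF sb])
  qed
  have "inj_on (\<lambda>\<pi>. \<pi>[i := insert s (\<pi> ! i)]) (signed_block_lists n k)"
    by (rule inj_on_inverseI[where g = "\<lambda>\<rho>. \<rho>[i := \<rho> ! i - {s}]"]) (simp add: len new)
  then have "(\<Sum>\<rho>\<in>(\<lambda>\<pi>. \<pi>[i := insert s (\<pi> ! i)]) ` signed_block_lists n k. q ^ mweight \<rho>)
      = (\<Sum>\<pi>\<in>signed_block_lists n k. q ^ mweight (\<pi>[i := insert s (\<pi> ! i)]))"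
    by (simp add: sum.reindex)
  also have "\<dots> = (\<Sum>\<pi>\<in>signed_block_lists n k. q ^ (2 * i + 1 + of_bool (s < 0)) * q ^ mweight \<pi>)"
    by (intro sum.cong refl) (simp add: mweight_list_update_insert fin len new power_add mult_ac)
  finally show ?thesis by (simp add: mgf_def sum_distrib_left)
qed

lemma sum_append_top:
  fixes q :: "'a::comm_semiring_1"
  shows "(\<Sum>\<rho>\<in>(\<lambda>\<pi>. \<pi> @ [{s}]) ` signed_block_lists n j. q ^ mweight \<rho>)
    = q ^ (2 * j + 1 + of_bool (s < 0)) * mgf q n j"
proof -
  have "inj_on (\<lambda>\<pi>. \<pi> @ [{s}]) (signed_block_lists n j)" by (simp add: inj_on_def)
  then have "(\<Sum>\<rho>\<in>(\<lambda>\<pi>. \<pi> @ [{s}]) ` signed_block_lists n j. q ^ mweight \<rho>)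
      = (\<Sum>\<pi>\<in>signed_block_lists n j. q ^ mweight (\<pi> @ [{s}]))"
    by (simp add: sum.reindex)
  also have "\<dots> = (\<Sum>\<pi>\<in>signed_block_lists n j. q ^ (2 * j + 1 + of_bool (s < 0)) * q ^ mweight \<pi>)"
  proof (intro sum.cong refl)
    fix \<pi> assume "\<pi> \<in> signed_block_lists n j"
    then have "length \<pi> = j" "finite (entries \<pi>)"
      using signed_blocks_finite_entries by (auto simp: signed_block_lists_def)
    then show "q ^ mweight (\<pi> @ [{s}]) = q ^ (2 * j + 1 + of_bool (s < 0)) * q ^ mweight \<pi>"
      by (simp add: mweight_append_singleton power_add mult_ac)
  qed
  finally show ?thesis by (simp add: mgf_def sum_distrib_left)
qed

lemma signed_block_lists_no_top:
  "{\<rho> \<in> signed_block_lists (Suc n) k. \<forall>(i, x)\<in>entries \<rho>. \<bar>x\<bar> \<noteq> int (Suc n)}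
    = signed_block_lists n k"
proof (intro equalityI subsetI)
  fix \<rho> assume "\<rho> \<in> {\<rho> \<in> signed_block_lists (Suc n) k. \<forall>(i, x)\<in>entries \<rho>. \<bar>x\<bar> \<noteq> int (Suc n)}"
  then show "\<rho> \<in> signed_block_lists n k"
    using signed_blocks_Suc_no_top by (simp add: signed_block_lists_def)
next
  fix \<pi> assume "\<pi> \<in> signed_block_lists n k"
  then have "length \<pi> = k" and sb: "signed_blocks n \<pi>" by (simp_all add: signed_block_lists_def)
  moreover have "signed_blocks (Suc n) \<pi>" using signed_blocks_mono[OF sb] by simp
  moreover have "\<bar>x\<bar> \<noteq> int (Suc n)" if "(i, x) \<in> entries \<pi>" for i x
    using signed_blocks_abs_bounds(2)[OF sb that] by simp
  ultimately show "\<pi> \<in> {\<rho> \<in> signed_block_lists (Suc n) k. \<forall>(i, x)\<in>entries \<rho>. \<bar>x\<bar> \<noteq> int (Suc n)}"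
    by (auto simp: signed_block_lists_def)
qed

lemma signed_block_lists_top_not_singleton:
  assumes i: "i < k" and s: "\<bar>s\<bar> = int (Suc n)"
  shows "{\<rho> \<in> signed_block_lists (Suc n) k. (i, s) \<in> entries \<rho> \<and> \<rho> ! i \<noteq> {s}}
    = (\<lambda>\<pi>. \<pi>[i := insert s (\<pi> ! i)]) ` signed_block_lists n k"
proof (intro equalityI subsetI)
  fix \<rho> assume "\<rho> \<in> {\<rho> \<in> signed_block_lists (Suc n) k. (i, s) \<in> entries \<rho> \<and> \<rho> ! i \<noteq> {s}}"
  then have len: "length \<rho> = k" and sb: "signed_blocks (Suc n) \<rho>"
    and top: "(i, s) \<in> entries \<rho>" and not_single: "\<rho> ! i \<noteq> {s}"
    by (simp_all add: signed_block_lists_def)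
  let ?\<pi> = "\<rho>[i := \<rho> ! i - {s}]"
  have "?\<pi> \<in> signed_block_lists n k"
    using signed_blocks_remove_top[OF sb top s not_single] len by (simp add: signed_block_lists_def)
  moreover have "\<rho> = ?\<pi>[i := insert s (?\<pi> ! i)]"
    using top by (simp add: mem_entries insert_absorb)
  ultimately show "\<rho> \<in> (\<lambda>\<pi>. \<pi>[i := insert s (\<pi> ! i)]) ` signed_block_lists n k"
    by (rule rev_image_eqI)
next
  fix \<rho> assume "\<rho> \<in> (\<lambda>\<pi>. \<pi>[i := insert s (\<pi> ! i)]) ` signed_block_lists n k"
  then obtain \<pi> where \<rho>: "\<rho> = \<pi>[i := insert s (\<pi> ! i)]" and "length \<pi> = k"
    and sb: "signed_blocks n \<pi>" by (auto simp: signed_block_lists_def)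
  then have i': "i < length \<pi>" using i by simp
  have "\<pi> ! i \<noteq> {}" using signed_blocksD(1)[OF sb] i' by simp
  moreover have "s \<notin> \<pi> ! i"
    using signed_blocks_abs_bounds(2)[OF sb, of i s] i' s by (auto simp: mem_entries)
  ultimately have "\<rho> ! i \<noteq> {s}" using \<rho> i' by auto
  moreover have "(i, s) \<in> entries \<rho>" using \<rho> i' by (simp add: mem_entries)
  moreover have "signed_blocks (Suc n) \<rho>" using signed_blocks_insert_top[OF sb i' s] \<rho> by simp
  ultimately show "\<rho> \<in> {\<rho> \<in> signed_block_lists (Suc n) k. (i, s) \<in> entries \<rho> \<and> \<rho> ! i \<noteq> {s}}"
    using \<rho> \<open>length \<pi> = k\<close> by (simp add: signed_block_lists_def)
qed

lemma signed_block_lists_top_singleton: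
  assumes s: "\<bar>s\<bar> = int (Suc n)"
  shows "{\<rho> \<in> signed_block_lists (Suc n) (Suc j). (i, s) \<in> entries \<rho> \<and> \<rho> ! i = {s}}
    = (if i = j then (\<lambda>\<pi>. \<pi> @ [{s}]) ` signed_block_lists n j else {})"
proof (intro equalityI subsetI)
  fix \<rho> assume "\<rho> \<in> {\<rho> \<in> signed_block_lists (Suc n) (Suc j). (i, s) \<in> entries \<rho> \<and> \<rho> ! i = {s}}"
  then have len: "length \<rho> = Suc j" and sb: "signed_blocks (Suc n) \<rho>"
    and i: "i < length \<rho>" and single: "\<rho> ! i = {s}"
    by (simp_all add: signed_block_lists_def mem_entries)
  note last = signed_blocks_singleton_top[OF sb i single s]
  have "i = j" using signed_blocks_singleton_top_last[OF sb i single s] len by simp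
  moreover have "butlast \<rho> \<in> signed_block_lists n j"
    using last(2) len by (simp add: signed_block_lists_def)
  ultimately show "\<rho> \<in> (if i = j then (\<lambda>\<pi>. \<pi> @ [{s}]) ` signed_block_lists n j else {})"
    using last(1) by (simp add: rev_image_eqI)
next
  fix \<rho> assume "\<rho> \<in> (if i = j then (\<lambda>\<pi>. \<pi> @ [{s}]) ` signed_block_lists n j else {})"
  then obtain \<pi> where "i = j" "\<rho> = \<pi> @ [{s}]" "length \<pi> = j" "signed_blocks n \<pi>"
    by (auto simp: signed_block_lists_def split: if_splits)
  then show "\<rho> \<in> {\<rho> \<in> signed_block_lists (Suc n) (Suc j). (i, s) \<in> entries \<rho> \<and> \<rho> ! i = {s}}"
    using signed_blocks_append_top[OF _ s] by (simp add: signed_block_lists_def mem_entries nth_append)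
qed

lemma sum_top_fiber:
  fixes q :: "'a::comm_semiring_1"
  assumes i: "i < Suc j" and s: "\<bar>s\<bar> = int (Suc n)"
  shows "(\<Sum>\<rho>\<in>{\<rho> \<in> signed_block_lists (Suc n) (Suc j). (i, s) \<in> entries \<rho>}. q ^ mweight \<rho>)
    = q ^ (2 * i + 1 + of_bool (s < 0)) * mgf q n (Suc j)
      + (if i = j then q ^ (2 * j + 1 + of_bool (s < 0)) * mgf q n j else 0)"
proof -
  let ?L = "signed_block_lists (Suc n) (Suc j)"
  have "{\<rho> \<in> ?L. (i, s) \<in> entries \<rho>}
      = {\<rho> \<in> ?L. (i, s) \<in> entries \<rho> \<and> \<rho> ! i \<noteq> {s}} \<union> {\<rho> \<in> ?L. (i, s) \<in> entries \<rho> \<and> \<rho> ! i = {s}}"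
    by blast
  then have "(\<Sum>\<rho>\<in>{\<rho> \<in> ?L. (i, s) \<in> entries \<rho>}. q ^ mweight \<rho>)
      = (\<Sum>\<rho>\<in>{\<rho> \<in> ?L. (i, s) \<in> entries \<rho> \<and> \<rho> ! i \<noteq> {s}}. q ^ mweight \<rho>)
        + (\<Sum>\<rho>\<in>{\<rho> \<in> ?L. (i, s) \<in> entries \<rho> \<and> \<rho> ! i = {s}}. q ^ mweight \<rho>)"
    by (simp add: sum.union_disjoint finite_signed_block_lists disjoint_iff)
  also have "\<dots> = q ^ (2 * i + 1 + of_bool (s < 0)) * mgf q n (Suc j)
      + (if i = j then q ^ (2 * j + 1 + of_bool (s < 0)) * mgf q n j else 0)"
    unfolding signed_block_lists_top_not_singleton[OF i s] signed_block_lists_top_singleton[OF s]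
    by (simp add: sum_insert_top[OF i s] sum_append_top)
  finally show ?thesis .
qed

lemma qint_Suc_double: "qint q (2 * k + 1) = 1 + (1 + q) * (\<Sum>i<k. q ^ (2 * i + 1))"
proof (induction k)
  case 0
  then show ?case by (simp add: qint_def)
next
  case (Suc k)
  have "qint q (2 * Suc k + 1) = qint q (2 * k + 1) + q ^ (2 * k + 1) + q ^ (2 * k + 2)"
    by (simp add: qint_def algebra_simps)
  then show ?case using Suc by (simp add: algebra_simps)
qed

lemma signed_block_lists_Suc_eq:
  "signed_block_lists (Suc n) k
    = {\<rho> \<in> signed_block_lists (Suc n) k. \<forall>(i, x)\<in>entries \<rho>. \<bar>x\<bar> \<noteq> int (Suc n)}
      \<union> (\<Union>e\<in>{..<k} \<times> {int (Suc n), - int (Suc n)}. {\<rho> \<in> signed_block_lists (Suc n) k. e \<in> entries \<rho>})"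
    (is "?L = ?no_top \<union> ?tops")
proof (intro equalityI subsetI)
  fix \<rho> assume \<rho>: "\<rho> \<in> ?L"
  show "\<rho> \<in> ?no_top \<union> ?tops"
  proof (cases "\<forall>(i, x)\<in>entries \<rho>. \<bar>x\<bar> \<noteq> int (Suc n)")
    case False
    then obtain i x where "(i, x) \<in> entries \<rho>" "\<bar>x\<bar> = int (Suc n)" by blast
    then have "i < k" "x \<in> {int (Suc n), - int (Suc n)}" "(i, x) \<in> entries \<rho>"
      using \<rho> by (auto simp: mem_entries signed_block_lists_def abs_if split: if_splits)
    then show ?thesis using \<rho> by blast
  qed (use \<rho> in blast)
qed auto

lemma sum_signed_block_lists_Suc:
  fixes f :: "int set list \<Rightarrow> 'a::comm_monoid_add"
  shows "(\<Sum>\<rho>\<in>signed_block_lists (Suc n) k. f \<rho>) = (\<Sum>\<pi>\<in>signed_block_lists n k. f \<pi>)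
    + (\<Sum>i<k. \<Sum>s\<in>{int (Suc n), - int (Suc n)}.
         \<Sum>\<rho>\<in>{\<rho> \<in> signed_block_lists (Suc n) k. (i, s) \<in> entries \<rho>}. f \<rho>)"
proof -
  let ?L = "signed_block_lists (Suc n) k"
  let ?no_top = "{\<rho> \<in> ?L. \<forall>(i, x)\<in>entries \<rho>. \<bar>x\<bar> \<noteq> int (Suc n)}"
  let ?S = "{int (Suc n), - int (Suc n)}"
  let ?F = "\<lambda>e. {\<rho> \<in> ?L. e \<in> entries \<rho>}"
  have disjoint: "?F e \<inter> ?F e' = {}"
    if e: "e \<in> {..<k} \<times> ?S" and e': "e' \<in> {..<k} \<times> ?S" and "e \<noteq> e'" for e e'
  proof -
    obtain i s i' s' where "e = (i, s)" "e' = (i', s')" "\<bar>s\<bar> = \<bar>s'\<bar>"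
      using e e' by auto
    then show ?thesis
      using signed_blocks_abs_eq \<open>e \<noteq> e'\<close> by (fastforce simp: signed_block_lists_def)
  qed
  have "(\<Union>e\<in>{..<k} \<times> ?S. ?F e) \<subseteq> ?L" by auto
  then have "finite (\<Union>e\<in>{..<k} \<times> ?S. ?F e)"
    using finite_signed_block_lists by (rule finite_subset)
  moreover have "?no_top \<inter> (\<Union>e\<in>{..<k} \<times> ?S. ?F e) = {}" by force
  ultimately have "sum f ?L = sum f ?no_top + sum f (\<Union>e\<in>{..<k} \<times> ?S. ?F e)"
    by (subst signed_block_lists_Suc_eq) (simp add: sum.union_disjoint finite_signed_block_lists)
  also have "sum f ?no_top = sum f (signed_block_lists n k)"
    unfolding signed_block_lists_no_top ..
  also have "sum f (\<Union>e\<in>{..<k} \<times> ?S. ?F e) = (\<Sum>e\<in>{..<k} \<times> ?S. sum f (?F e))"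
  proof (rule sum.UNION_disjoint)
    show "\<forall>e\<in>{..<k} \<times> ?S. finite (?F e)" by (simp add: finite_signed_block_lists)
  qed (use disjoint in auto)
  also have "\<dots> = (\<Sum>i<k. \<Sum>s\<in>?S. sum f (?F (i, s)))"
    unfolding sum.cartesian_product by (rule sum.cong) auto
  finally show ?thesis .
qed

lemma mgf_Suc_Suc:
  fixes q :: "'a::comm_semiring_1"
  shows "mgf q (Suc n) (Suc j)
    = q ^ (2 * j + 1) * (1 + q) * mgf q n j + qint q (2 * Suc j + 1) * mgf q n (Suc j)"
proof -
  let ?S = "{int (Suc n), - int (Suc n)}"
  let ?F = "\<lambda>i s. {\<rho> \<in> signed_block_lists (Suc n) (Suc j). (i, s) \<in> entries \<rho>}"
  have "mgf q (Suc n) (Suc j)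
      = mgf q n (Suc j) + (\<Sum>i<Suc j. \<Sum>s\<in>?S. \<Sum>\<rho>\<in>?F i s. q ^ mweight \<rho>)"
    unfolding mgf_def by (rule sum_signed_block_lists_Suc)
  also have "(\<Sum>i<Suc j. \<Sum>s\<in>?S. \<Sum>\<rho>\<in>?F i s. q ^ mweight \<rho>)
      = (\<Sum>i<Suc j. \<Sum>s\<in>?S. q ^ (2 * i + 1 + of_bool (s < 0)) * mgf q n (Suc j)
          + (if i = j then q ^ (2 * j + 1 + of_bool (s < 0)) * mgf q n j else 0))"
  proof (intro sum.cong refl)
    fix i s assume "i \<in> {..<Suc j}" "s \<in> ?S"
    then show "(\<Sum>\<rho>\<in>?F i s. q ^ mweight \<rho>) = q ^ (2 * i + 1 + of_bool (s < 0)) * mgf q n (Suc j)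
        + (if i = j then q ^ (2 * j + 1 + of_bool (s < 0)) * mgf q n j else 0)"
      by (intro sum_top_fiber) auto
  qed
  also have "\<dots> = (\<Sum>i<Suc j. q ^ (2 * i + 1) * (1 + q) * mgf q n (Suc j)
      + (if i = j then q ^ (2 * j + 1) * (1 + q) * mgf q n j else 0))"
    by (intro sum.cong refl) (simp add: algebra_simps)
  also have "\<dots> = (\<Sum>i<Suc j. q ^ (2 * i + 1)) * ((1 + q) * mgf q n (Suc j))
      + q ^ (2 * j + 1) * (1 + q) * mgf q n j"
    by (simp only: sum.distrib sum_distrib_right mult.assoc) simp
  finally show ?thesis unfolding qint_Suc_double by (simp add: algebra_simps)
qed

lemma mgf_0_right: "mgf q n 0 = 1"
proof -
  have "signed_block_lists n 0 = {[]}"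
    by (auto simp: signed_block_lists_def signed_blocks_def entries_def)
  then show ?thesis by (simp add: mgf_def mweight_def entries_def)
qed

lemma mgf_0_Suc: "mgf q 0 (Suc j) = 0"
proof -
  have "\<not> signed_blocks 0 \<pi>" if "length \<pi> = Suc j" for \<pi>
  proof
    assume sb: "signed_blocks 0 \<pi>"
    have "\<pi> ! 0 \<noteq> {}" using signed_blocksD(1)[OF sb] that by simp
    then obtain x where "x \<in> \<pi> ! 0" by blast
    then have "(0, x) \<in> entries \<pi>" using that by (simp add: mem_entries)
    then show False using signed_blocks_abs_bounds[OF sb] by fastforce
  qed
  then have "signed_block_lists 0 (Suc j) = {}" by (auto simp: signed_block_lists_def)
  then show ?thesis by (simp add: mgf_def)
qed

lemma SB_eq_mgf:
  fixes q :: "'a::comm_semiring_1"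
  shows "q ^ (k ^ 2) * qint q 2 ^ k * SB q n k = mgf q n k"
proof (induction n arbitrary: k)
  case 0
  then show ?case by (cases k) (simp_all add: mgf_0_right mgf_0_Suc)
next
  case (Suc n)
  show ?case
  proof (cases k)
    case 0
    have "SB q m 0 = 1" for m by (induction m) (simp_all add: qint_def)
    then show ?thesis using 0 by (simp add: mgf_0_right qint_def)
  next
    case (Suc j)
    have "Suc j ^ 2 = (2 * j + 1) + j ^ 2" by (simp add: power2_eq_square)
    then have "q ^ (Suc j ^ 2) = q ^ (2 * j + 1) * q ^ (j ^ 2)" by (simp only: power_add)
    moreover have "qint q 2 = 1 + q" by (simp add: qint_def numeral_2_eq_2)
    ultimately show ?thesis
      unfolding Suc mgf_Suc_Suc Suc.IH[symmetric] by (simp add: algebra_simps)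
  qed
qed

theorem proposition3p2:
  fixes q :: "'a::comm_ring_1" and n k :: nat
  assumes "k \<le> n"
  shows "q ^ (k ^ 2) * (qint q 2) ^ k * SB q n k
           = (\<Sum>\<pi>\<in>pssp {1..int n} k. q ^ nat (mstat \<pi>))"
proof -
  have "(\<Sum>\<pi>\<in>pssp {1..int n} k. q ^ nat (mstat \<pi>)) = mgf q n k"
    unfolding pssp_atLeastAtMost mgf_def
  proof (intro sum.cong refl)
    fix \<pi> assume "\<pi> \<in> signed_block_lists n k"
    then show "q ^ nat (mstat \<pi>) = q ^ mweight \<pi>"
      using mstat_eq_mweight[of n \<pi>] by (simp add: signed_block_lists_def)
  qed
  then show ?thesis by (simp add: SB_eq_mgf)
qed

end
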